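(* If $v$ is a leaf of a tree $T$ with at least four vertices, then fewer than half of the subtrees of $T$ contain $v$.
   Context: A leaf is a vertex of degree at most 1. A subtree of $T$ is a nonempty set of vertices of $T$ inducing a connected subgraph. *)

theory Defs
  imports Main
begin

definition graph :: "'a set \<Rightarrow> 'a set set \<Rightarrow> bool" where
  "graph V E \<longleftrightarrow> finite V \<and> (\<forall>e\<in>E. e \<subseteq> V \<and> card e = 2)"

definition adj :: "'a set set \<Rightarrow> 'a \<Rightarrow> 'a \<Rightarrow> bool" where
  "adj E u v \<longleftrightarrow> {u, v} \<in> E"

definition degree :: "'a set set \<Rightarrow> 'a \<Rightarrow> nat" where
  "degree E v = card {e\<in>E. v \<in> e}"

definition walk_in :: "'a set set \<Rightarrow> 'a set \<Rightarrow> 'a list \<Rightarrow> bool" where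
  "walk_in E S p \<longleftrightarrow> p \<noteq> [] \<and> set p \<subseteq> S \<and>
     (\<forall>i. Suc i < length p \<longrightarrow> adj E (p ! i) (p ! Suc i))"

text \<open>S induces a connected subgraph (the empty set counts as connected here;
  nonemptiness is required separately for subtrees).\<close>
definition connected_set :: "'a set set \<Rightarrow> 'a set \<Rightarrow> bool" where
  "connected_set E S \<longleftrightarrow> (\<forall>u\<in>S. \<forall>v\<in>S. \<exists>p. walk_in E S p \<and> hd p = u \<and> last p = v)"

definition is_cycle :: "'a set set \<Rightarrow> 'a list \<Rightarrow> bool" where
  "is_cycle E c \<longleftrightarrow> length c \<ge> 3 \<and> distinct c \<and>
     (\<forall>i. Suc i < length c \<longrightarrow> adj E (c ! i) (c ! Suc i)) \<and> adj E (last c) (hd c)"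

definition tree :: "'a set \<Rightarrow> 'a set set \<Rightarrow> bool" where
  "tree V E \<longleftrightarrow> graph V E \<and> V \<noteq> {} \<and> connected_set E V \<and> \<not> (\<exists>c. set c \<subseteq> V \<and> is_cycle E c)"

definition leaf :: "'a set \<Rightarrow> 'a set set \<Rightarrow> 'a \<Rightarrow> bool" where
  "leaf V E v \<longleftrightarrow> v \<in> V \<and> degree E v \<le> 1"

definition subtrees :: "'a set \<Rightarrow> 'a set set \<Rightarrow> 'a set set" where
  "subtrees V E = {S. S \<subseteq> V \<and> S \<noteq> {} \<and> connected_set E S}"

end

theory Submission
  imports Defs
begin

text \<open>Let \<open>u\<close> be the neighbour of the leaf \<open>v\<close> (any other vertex if \<open>v\<close> is isolated). Deleting \<open>v\<close>
  maps the subtrees containing \<open>v\<close>, apart from \<open>{v}\<close>, injectively to subtrees avoiding \<open>v\<close> but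
  containing \<open>u\<close>: a walk through \<open>v\<close> must enter and leave it via \<open>u\<close>, so \<open>v\<close> can be cut out.
  With at least four vertices there are two further vertices \<open>w \<noteq> w'\<close>, whose singletons avoid
  both \<open>u\<close> and \<open>v\<close>. Hence if \<open>a\<close> and \<open>b\<close> count the subtrees with and without \<open>v\<close>,
  then \<open>a \<le> 1 + (b - 2) < b\<close>.\<close>

lemma adj_commute: "adj E a b \<longleftrightarrow> adj E b a"
  by (simp add: adj_def insert_commute)

lemma walk_in_singleton: "walk_in E S [x] \<longleftrightarrow> x \<in> S"
  by (simp add: walk_in_def)

lemma walk_in_Cons_Cons:
  "walk_in E S (x # y # p) \<longleftrightarrow> x \<in> S \<and> adj E x y \<and> walk_in E S (y # p)"
proof -
  have "(\<forall>i. Suc i < length (x # y # p) \<longrightarrow> adj E ((x # y # p) ! i) ((x # y # p) ! Suc i))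
      \<longleftrightarrow> adj E x y \<and> (\<forall>i. Suc i < length (y # p) \<longrightarrow> adj E ((y # p) ! i) ((y # p) ! Suc i))"
    (is "?all \<longleftrightarrow> _")
  proof
    assume ?all
    then show "adj E x y \<and> (\<forall>i. Suc i < length (y # p) \<longrightarrow> adj E ((y # p) ! i) ((y # p) ! Suc i))"
      by (metis (no_types, lifting) Suc_less_eq length_Cons nth_Cons_0 nth_Cons_Suc zero_less_Suc)
  next
    assume "adj E x y \<and> (\<forall>i. Suc i < length (y # p) \<longrightarrow> adj E ((y # p) ! i) ((y # p) ! Suc i))"
    then show ?all
      by (metis (no_types, lifting) Suc_less_eq length_Cons less_Suc_eq_0_disj nth_Cons_0 nth_Cons_Suc)
  qed
  then show ?thesis
    by (auto simp: walk_in_def)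
qed

lemma connected_set_singleton: "connected_set E {x}"
  unfolding connected_set_def by (auto intro!: exI[of _ "[x]"] simp: walk_in_singleton)

lemma connected_set_has_neighbour:
  assumes "connected_set E S" and "v \<in> S" and "x \<in> S" and "x \<noteq> v"
  shows "\<exists>y\<in>S. adj E v y"
proof -
  obtain p where p: "walk_in E S p" "hd p = v" "last p = x"
    using assms unfolding connected_set_def by blast
  then obtain y r where "p = v # y # r"
    using assms(4) unfolding walk_in_def by (metis last.simps list.collapse)
  then have "adj E v y" and "walk_in E S (y # r)"
    using p(1) by (simp_all add: walk_in_Cons_Cons)
  then show ?thesis
    by (auto simp: walk_in_def)
qed

lemma walk_in_avoid_pendant:
  assumes pendant: "\<And>y. adj E v y \<Longrightarrow> y = u"
  shows "walk_in E S p \<Longrightarrow> hd p \<noteq> v \<Longrightarrow> last p \<noteq> v \<Longrightarrow>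
    \<exists>q. walk_in E (S - {v}) q \<and> hd q = hd p \<and> last q = last p"
proof (induction "length p" arbitrary: p rule: less_induct)
  case less
  show ?case
  proof (cases p)
    case Nil
    then show ?thesis using less.prems by (simp add: walk_in_def)
  next
    case (Cons x r)
    show ?thesis
    proof (cases r)
      case Nil
      then show ?thesis
        using less.prems Cons by (intro exI[of _ "[x]"]) (auto simp: walk_in_singleton)
    next
      case (Cons y r')
      have p: "p = x # y # r'" using \<open>p = x # r\<close> Cons by simp
      have walk: "x \<in> S" "adj E x y" "walk_in E S (y # r')"
        using less.prems(1) by (simp_all add: p walk_in_Cons_Cons)
      show ?thesis
      proof (cases "y = v")
        case False
        obtain q where q: "walk_in E (S - {v}) q" "hd q = y" "last q = last (y # r')"
          using less.hyps[of "y # r'"] walk less.prems False by (auto simp: p)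
        then obtain q' where "q = y # q'"
          by (metis list.collapse walk_in_def)
        then show ?thesis
          using q walk less.prems by (intro exI[of _ "x # q"]) (auto simp: p walk_in_Cons_Cons)
      next
        case True
        then obtain z r'' where r': "r' = z # r''"
          using less.prems p by (cases r') auto
        have "adj E v z" and "adj E v x"
          using walk True r' by (simp_all add: walk_in_Cons_Cons adj_commute)
        then have "z = x" using pendant by blast
        then show ?thesis
          using less.hyps[of "z # r''"] walk r' less.prems by (auto simp: p walk_in_Cons_Cons)
      qed
    qed
  qed
qed

lemma connected_set_Diff_pendant:
  assumes "\<And>y. adj E v y \<Longrightarrow> y = u" and "connected_set E S"
  shows "connected_set E (S - {v})"
  unfolding connected_set_def
proof (intro ballI)
  fix a b assume ab: "a \<in> S - {v}" "b \<in> S - {v}"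
  then obtain p where "walk_in E S p" "hd p = a" "last p = b"
    using assms(2) unfolding connected_set_def by blast
  then show "\<exists>q. walk_in E (S - {v}) q \<and> hd q = a \<and> last q = b"
    using walk_in_avoid_pendant[OF assms(1)] ab by fastforce
qed

lemma graph_adj_mem:
  assumes "graph V E" and "adj E v y"
  shows "y \<in> V" and "y \<noteq> v"
  using assms unfolding graph_def adj_def by (fastforce simp: card_2_iff)+

lemma graph_adj_unique_if_degree_le_1:
  assumes "graph V E" and "degree E v \<le> 1" and "adj E v y" and "adj E v z"
  shows "y = z"
proof -
  have "finite E"
    using assms(1) unfolding graph_def by (meson Pow_iff finite_Pow_iff finite_subset subsetI)
  moreover have "{v, y} \<in> {e \<in> E. v \<in> e}" and "{v, z} \<in> {e \<in> E. v \<in> e}"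
    using assms(3,4) unfolding adj_def by auto
  ultimately have "{v, y} = {v, z}"
    using assms(2) card_le_Suc0_iff_eq[of "{e \<in> E. v \<in> e}"] unfolding degree_def by auto
  then show ?thesis
    using graph_adj_mem(2)[OF assms(1,3)] by (metis doubleton_eq_iff)
qed

lemma finite_subtrees: "finite V \<Longrightarrow> finite (subtrees V E)"
  unfolding subtrees_def by (simp add: finite_subset[of _ "Pow V"] subset_iff)

lemma singleton_in_subtrees: "x \<in> V \<Longrightarrow> {x} \<in> subtrees V E"
  by (simp add: subtrees_def connected_set_singleton)

lemma subtree_Diff_pendant:
  assumes pendant: "\<And>y. adj E v y \<Longrightarrow> y = u" and "u \<noteq> v"
    and S: "S \<in> subtrees V E" "v \<in> S" "S \<noteq> {v}"
  shows "S - {v} \<in> subtrees V E" and "u \<in> S - {v}"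
proof -
  have "S \<subseteq> V" "connected_set E S"
    using S(1) by (simp_all add: subtrees_def)
  obtain x where "x \<in> S" "x \<noteq> v"
    using S(2,3) by blast
  then obtain y where "y \<in> S" "adj E v y"
    using connected_set_has_neighbour \<open>connected_set E S\<close> S(2) by metis
  then show "u \<in> S - {v}"
    using pendant \<open>u \<noteq> v\<close> by auto
  moreover have "connected_set E (S - {v})"
    using connected_set_Diff_pendant[OF pendant \<open>connected_set E S\<close>] .
  ultimately show "S - {v} \<in> subtrees V E"
    using \<open>S \<subseteq> V\<close> by (auto simp: subtrees_def)
qed

lemma card_subtrees_through_pendant_le:
  assumes "finite V" and pendant: "\<And>y. adj E v y \<Longrightarrow> y = u" and "u \<noteq> v"
  shows "card ({S \<in> subtrees V E. v \<in> S} - {{v}}) \<le> card {T \<in> subtrees V E. v \<notin> T \<and> u \<in> T}"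
proof (rule card_inj_on_le)
  show "inj_on (\<lambda>S. S - {v}) ({S \<in> subtrees V E. v \<in> S} - {{v}})"
    by (rule inj_onI) (auto dest: arg_cong[of _ _ "insert v"])
  show "(\<lambda>S. S - {v}) ` ({S \<in> subtrees V E. v \<in> S} - {{v}})
      \<subseteq> {T \<in> subtrees V E. v \<notin> T \<and> u \<in> T}"
    using subtree_Diff_pendant[where E = E and V = V, OF pendant \<open>u \<noteq> v\<close>] by auto
  show "finite {T \<in> subtrees V E. v \<notin> T \<and> u \<in> T}"
    using finite_subtrees[OF \<open>finite V\<close>] by simp
qed

lemma degree_le_1_ex_only_neighbour:
  assumes "graph V E" and "card V \<ge> 2" and "v \<in> V" and "degree E v \<le> 1"
  obtains u where "u \<in> V" "u \<noteq> v" "\<And>y. adj E v y \<Longrightarrow> y = u"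
proof (cases "\<exists>y. adj E v y")
  case True
  then show ?thesis
    using that graph_adj_unique_if_degree_le_1[OF assms(1,4)] graph_adj_mem[OF assms(1)] by blast
next
  case False
  have "card (V - {v}) \<ge> 1"
    using assms(1-3) by (simp add: graph_def)
  then obtain x where "x \<in> V - {v}"
    by (metis card.empty ex_in_conv not_one_le_zero)
  then show ?thesis
    using that False by blast
qed

theorem twice_card_subtrees_containing_degree_le_1_less:
  assumes "graph V E" and "card V \<ge> 4" and "v \<in> V" and "degree E v \<le> 1"
  shows "2 * card {S \<in> subtrees V E. v \<in> S} < card (subtrees V E)"
proof -
  have "finite V" using assms(1) by (simp add: graph_def)
  have "card V \<ge> 2" using assms(2) by simp
  then obtain u where u: "u \<in> V" "u \<noteq> v" and pendant: "\<And>y. adj E v y \<Longrightarrow> y = u"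
    using degree_le_1_ex_only_neighbour[OF assms(1) _ assms(3,4)] by blast
  have "card (V - {u, v}) \<ge> 2"
    using assms(2,3) u \<open>finite V\<close> by (simp add: card_Diff_subset)
  then obtain w w' where w: "w \<in> V - {u, v}" "w' \<in> V - {u, v}" "w \<noteq> w'"
    using card_le_Suc0_iff_eq[of "V - {u, v}"] \<open>finite V\<close> by auto
  define A where "A = {S \<in> subtrees V E. v \<in> S}"
  define B where "B = {T \<in> subtrees V E. v \<notin> T}"
  have "finite B" using finite_subtrees[OF \<open>finite V\<close>] by (simp add: B_def)
  have singletons: "{{w}, {w'}} \<subseteq> B"
    using w by (auto simp: B_def singleton_in_subtrees)
  have "card (A - {{v}}) \<le> card {T \<in> B. u \<in> T}"
    using card_subtrees_through_pendant_le[where E = E, OF \<open>finite V\<close> pendant u(2)]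
    unfolding A_def B_def by (simp add: conj_ac)
  also have "\<dots> \<le> card (B - {{w}, {w'}})"
    using \<open>finite B\<close> w by (intro card_mono) auto
  also have "\<dots> = card B - 2"
    using singletons \<open>finite B\<close> \<open>w \<noteq> w'\<close> by (simp add: card_Diff_subset)
  finally have "card (A - {{v}}) + 2 \<le> card B"
    using card_mono[OF \<open>finite B\<close> singletons] \<open>w \<noteq> w'\<close> by simp
  moreover have "card A \<le> card (A - {{v}}) + 1"
    by (simp add: card_Diff_singleton_if) arith
  moreover have "card (subtrees V E) = card A + card B"
  proof -
    have "subtrees V E = A \<union> B" "A \<inter> B = {}" by (auto simp: A_def B_def)
    then show ?thesis
      using finite_subtrees[OF \<open>finite V\<close>, of E] card_Un_disjoint[of A B] by simp
  qed
  ultimately show ?thesis unfolding A_def by linarith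
qed

theorem mainTheorem5:
  assumes "tree V E" and "card V \<ge> 4" and "leaf V E v"
  shows "2 * card {S \<in> subtrees V E. v \<in> S} < card (subtrees V E)"
  using twice_card_subtrees_containing_degree_le_1_less[of V E v] assms
  by (simp add: tree_def leaf_def)

end
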